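(* For an arbitrary fixed order, if $OPT(I)=1$ then $FF(I)=1$, and if $OPT(I)=2$ then $FF(I)\le 3$. Hence first-fit is a $3/2$-approximation on instances with $OPT(I)\le 2$.
   Context: Fixed order scheduling with deadlines: there are jobs $J=\{1,\dots,n\}$, each job $j$ having a processing time $p_j\in\mathbb{N}$, $p_j>0$, and a deadline $d_j\in\mathbb{N}$ with $d_j\ge p_j$ (no other assumption relating order, deadlines, or processing times). All jobs are released at time $0$; job $j$ precedes job $k$ in the fixed order iff $j<k$. A schedule $\tau:J\to\{1,\dots,n\}$ assigns jobs to identical machines; each machine processes its jobs in the fixed order from time $0$ without idle time or preemption, so job $j$ completes at $\sum_{k\le j,\tau(k)=\tau(j)}p_k$; it is feasible if every job completes by its deadline. $OPT(I)$ is the minimum number of machines used by a feasible schedule. First-fit (FF): machines indexed $1,2,\dots$; process jobs in the fixed order and assign each job $j$ to the smallest-index machine whose current load (sum of processing times already assigned) plus $p_j$ is at most $d_j$; $FF(I)$ is the number of nonempty machines. *)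

theory Defs
  imports Main
begin

text \<open>Jobs are 1..n, processed in fixed order 1 < 2 < ... < n; machines are 1..n.
  A schedule is a function tau :: nat => nat (only its values on 1..n matter).\<close>

definition completion :: "(nat \<Rightarrow> nat) \<Rightarrow> (nat \<Rightarrow> nat) \<Rightarrow> nat \<Rightarrow> nat" where
  "completion p tau j = (\<Sum>k\<in>{k\<in>{1..j}. tau k = tau j}. p k)"

definition feasible :: "nat \<Rightarrow> (nat \<Rightarrow> nat) \<Rightarrow> (nat \<Rightarrow> nat) \<Rightarrow> (nat \<Rightarrow> nat) \<Rightarrow> bool" where
  "feasible n p d tau \<longleftrightarrow>
     (\<forall>j\<in>{1..n}. tau j \<in> {1..n}) \<and> (\<forall>j\<in>{1..n}. completion p tau j \<le> d j)"

definition OPT :: "nat \<Rightarrow> (nat \<Rightarrow> nat) \<Rightarrow> (nat \<Rightarrow> nat) \<Rightarrow> nat" where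
  "OPT n p d = (LEAST m. \<exists>tau. feasible n p d tau \<and> card (tau ` {1..n}) = m)"

primrec ff_sched :: "nat \<Rightarrow> (nat \<Rightarrow> nat) \<Rightarrow> (nat \<Rightarrow> nat) \<Rightarrow> (nat \<Rightarrow> nat)" where
  "ff_sched 0 p d = (\<lambda>_. 0)"
| "ff_sched (Suc k) p d =
     (let sigma = ff_sched k p d;
          load = (\<lambda>m. \<Sum>i\<in>{i\<in>{1..k}. sigma i = m}. p i)
      in sigma(Suc k := (LEAST m. 1 \<le> m \<and> load m + p (Suc k) \<le> d (Suc k))))"

definition FF :: "nat \<Rightarrow> (nat \<Rightarrow> nat) \<Rightarrow> (nat \<Rightarrow> nat) \<Rightarrow> nat" where
  "FF n p d = card (ff_sched n p d ` {1..n})"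

end

theory Submission
  imports Defs
begin

text \<open>If one machine suffices, every prefix of jobs meets its last deadline, so first-fit
  keeps all jobs on machine 1.

  Let two machines suffice and suppose first-fit sends job \<open>j\<close> beyond machine 3. Let \<open>u\<close>
  be the optimal machine of \<open>j\<close>, and \<open>a\<close>, \<open>b\<close> the work before \<open>j\<close> on \<open>u\<close> and on the
  other optimal machine \<open>v\<close>. As \<open>j\<close> fits after \<open>a\<close> but on no first-fit machine,
  \<open>a < L m\<close> for the first-fit loads \<open>L 1, L 2, L 3\<close>. So some job before \<open>j\<close> lies on \<open>v\<close>
  and on first-fit machine 2 or 3; let \<open>z\<close> be the last one and \<open>m\<close> its first-fit machine.
  The \<open>v\<close>-work up to \<open>z\<close> meets \<open>d z\<close>, which \<open>z\<close> overflowed on machine 1, and all later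
  \<open>v\<close>-work went to machine 1, so \<open>b < L 1 + L m\<close>. With \<open>a\<close> below the third load this
  gives \<open>a + b < L 1 + L 2 + L 3 = a + b\<close>.\<close>

definition ff_machine :: "(nat \<Rightarrow> nat) \<Rightarrow> (nat \<Rightarrow> nat) \<Rightarrow> nat \<Rightarrow> nat" where
  "ff_machine p d i = ff_sched i p d i"

definition ff_load :: "(nat \<Rightarrow> nat) \<Rightarrow> (nat \<Rightarrow> nat) \<Rightarrow> nat \<Rightarrow> nat \<Rightarrow> nat" where
  "ff_load p d k m = (\<Sum>i\<in>{1..k}. if ff_machine p d i = m then p i else 0)"

lemma sum_atLeastAtMost_split:
  fixes f :: "nat \<Rightarrow> 'a::comm_monoid_add"
  assumes "z \<le> k"
  shows "(\<Sum>i\<in>{1..k}. f i) = (\<Sum>i\<in>{1..z}. f i) + (\<Sum>i\<in>{Suc z..k}. f i)"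
  using sum.ub_add_nat[of 1 z f "k - z"] assms by simp

lemma ff_sched_eq_ff_machine:
  "1 \<le> i \<Longrightarrow> i \<le> k \<Longrightarrow> ff_sched k p d i = ff_machine p d i"
proof (induction k)
  case (Suc k)
  then show ?case by (cases "i = Suc k") (simp_all add: ff_machine_def Let_def)
qed simp

lemma ff_machine_Suc:
  "ff_machine p d (Suc k) = (LEAST m. 1 \<le> m \<and> ff_load p d k m + p (Suc k) \<le> d (Suc k))"
proof -
  have "(\<Sum>i\<in>{i\<in>{1..k}. ff_sched k p d i = m}. p i) = ff_load p d k m" for m
    unfolding ff_load_def sum.inter_filter[OF finite_atLeastAtMost, symmetric]
    by (intro sum.cong) (auto simp: ff_sched_eq_ff_machine)
  then show ?thesis by (simp add: ff_machine_def Let_def)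
qed

lemma ff_load_unused_machine: "\<exists>m\<ge>1. ff_load p d k m = 0"
proof -
  define m where "m = Suc (Max (ff_machine p d ` {1..k}))"
  have "ff_machine p d i \<noteq> m" if "i \<in> {1..k}" for i
  proof -
    have "ff_machine p d i \<le> Max (ff_machine p d ` {1..k})"
      using that by (intro Max_ge) auto
    then show ?thesis unfolding m_def by simp
  qed
  then have "ff_load p d k m = 0"
    unfolding ff_load_def by (intro sum.neutral) simp
  moreover have "1 \<le> m" unfolding m_def by simp
  ultimately show ?thesis by blast
qed

lemma ff_machine_pos:
  assumes "1 \<le> i" "p i \<le> d i"
  shows "1 \<le> ff_machine p d i"
proof -
  obtain k where i: "i = Suc k" using assms(1) by (cases i) auto
  obtain m where "1 \<le> m" "ff_load p d k m = 0"
    using ff_load_unused_machine by blast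
  then have "1 \<le> m \<and> ff_load p d k m + p (Suc k) \<le> d (Suc k)"
    using assms(2) i by simp
  from LeastI[of "\<lambda>m. 1 \<le> m \<and> ff_load p d k m + p (Suc k) \<le> d (Suc k)", OF this]
  show ?thesis by (simp add: i ff_machine_Suc)
qed

lemma ff_machine_first_fit:
  assumes "1 \<le> m" "m < ff_machine p d (Suc k)"
  shows "d (Suc k) < ff_load p d k m + p (Suc k)"
  using not_less_Least[of m "\<lambda>m. 1 \<le> m \<and> ff_load p d k m + p (Suc k) \<le> d (Suc k)"] assms
  by (auto simp: ff_machine_Suc)

lemma FF_eq_card: "FF n p d = card (ff_machine p d ` {1..n})"
  unfolding FF_def by (intro arg_cong[where f = card] image_cong) (auto simp: ff_sched_eq_ff_machine)

lemma FF_le: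
  assumes "\<forall>j\<in>{1..n}. p j \<le> d j" and "\<forall>i\<in>{1..n}. ff_machine p d i \<le> m"
  shows "FF n p d \<le> m"
proof -
  have "ff_machine p d ` {1..n} \<subseteq> {1..m}"
    using assms ff_machine_pos[of _ p d] by auto
  then have "card (ff_machine p d ` {1..n}) \<le> card {1..m}"
    by (intro card_mono) simp_all
  then show ?thesis by (simp add: FF_eq_card)
qed

lemma completion_eq_sum_if:
  "completion p tau j = (\<Sum>i\<in>{1..j}. if tau i = tau j then p i else 0)"
  unfolding completion_def by (rule sum.inter_filter) simp

lemma feasible_completion_le:
  "feasible n p d tau \<Longrightarrow> j \<in> {1..n} \<Longrightarrow> completion p tau j \<le> d j"
  by (simp add: feasible_def)

lemma OPT_attained:
  assumes "\<forall>j\<in>{1..n}. p j \<le> d j"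
  shows "\<exists>tau. feasible n p d tau \<and> card (tau ` {1..n}) = OPT n p d"
proof -
  have "completion p id j = p j" if "1 \<le> j" for j
    using that by (simp add: completion_eq_sum_if sum.delta')
  then have "feasible n p d id" using assms by (simp add: feasible_def)
  then have "\<exists>tau. feasible n p d tau \<and> card (tau ` {1..n}) = card (id ` {1..n})"
    by blast
  then show ?thesis unfolding OPT_def by (rule LeastI)
qed

lemma ff_machine_eq_1_if_prefixes_fit:
  assumes "\<forall>i\<in>{1..n}. (\<Sum>k\<in>{1..i}. p k) \<le> d i"
  shows "\<forall>i\<in>{1..n}. ff_machine p d i = 1"
  using assms
proof (induction n)
  case (Suc k)
  then have IH: "\<forall>i\<in>{1..k}. ff_machine p d i = 1" by simp
  have "ff_load p d k 1 = (\<Sum>i\<in>{1..k}. p i)"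
    unfolding ff_load_def using IH by (intro sum.cong) simp_all
  moreover have "(\<Sum>i\<in>{1..Suc k}. p i) \<le> d (Suc k)"
    using Suc.prems by (simp del: sum.cl_ivl_Suc)
  ultimately have "ff_load p d k 1 + p (Suc k) \<le> d (Suc k)" by simp
  then have "ff_machine p d (Suc k) = 1"
    unfolding ff_machine_Suc by (intro Least_equality) simp_all
  then show ?case using IH by (auto simp: atLeastAtMostSuc_conv)
qed simp

lemma card_image_le_2_eq:
  assumes "finite A" "card (f ` A) \<le> 2" "x \<in> A" "y \<in> A" "w \<in> A"
    and "f x \<noteq> f y" "f w \<noteq> f y"
  shows "f w = f x"
proof (rule ccontr)
  assume "f w \<noteq> f x"
  then have "card {f x, f y, f w} = 3" using assms(6,7) by simp
  moreover have "card {f x, f y, f w} \<le> card (f ` A)"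
    using assms(1,3-5) by (intro card_mono) auto
  ultimately show False using assms(2) by simp
qed

text \<open>Job \<open>z\<close> overflowed first-fit machine 1, so work that was due by \<open>d z\<close> is below
  that machine's load at time \<open>z\<close> plus \<open>p z\<close>.\<close>

lemma ff_overflow_bound:
  fixes f :: "nat \<Rightarrow> nat"
  assumes z: "z \<in> {1..k}" "1 < ff_machine p d z"
    and before: "(\<Sum>i\<in>{1..z}. f i) \<le> d z"
    and after: "\<forall>i\<in>{Suc z..k}. f i \<le> (if ff_machine p d i = 1 then p i else 0)"
  shows "(\<Sum>i\<in>{1..k}. f i) < ff_load p d k 1 + ff_load p d k (ff_machine p d z)"
proof -
  obtain z' where z': "z = Suc z'" using z(1) by (cases z) auto
  let ?on1 = "\<lambda>i. if ff_machine p d i = 1 then p i else 0"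
  have overflow: "d z < ff_load p d z' 1 + p z"
    using ff_machine_first_fit[of 1 p d z'] z(2) z' by simp
  have "ff_load p d z 1 = ff_load p d z' 1"
    using z(2) z' by (simp add: ff_load_def)
  moreover have "ff_load p d k 1 = ff_load p d z 1 + (\<Sum>i\<in>{Suc z..k}. ?on1 i)"
    unfolding ff_load_def using z(1) by (intro sum_atLeastAtMost_split) simp
  ultimately have load1: "ff_load p d k 1 = ff_load p d z' 1 + (\<Sum>i\<in>{Suc z..k}. ?on1 i)"
    by simp
  have "(\<Sum>i\<in>{Suc z..k}. f i) \<le> (\<Sum>i\<in>{Suc z..k}. ?on1 i)"
    using after by (intro sum_mono) blast
  moreover have "(\<Sum>i\<in>{1..k}. f i) = (\<Sum>i\<in>{1..z}. f i) + (\<Sum>i\<in>{Suc z..k}. f i)"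
    using z(1) by (intro sum_atLeastAtMost_split) simp
  moreover have "p z \<le> ff_load p d k (ff_machine p d z)"
    unfolding ff_load_def
    using member_le_sum[of z "{1..k}" "\<lambda>i. if ff_machine p d i = ff_machine p d z then p i else 0"] z(1)
    by simp
  ultimately show ?thesis using before overflow load1 by linarith
qed

lemma ff_load_sum_machines:
  assumes "finite M" "\<forall>i\<in>{1..k}. ff_machine p d i \<in> M"
  shows "(\<Sum>m\<in>M. ff_load p d k m) = (\<Sum>i\<in>{1..k}. p i)"
proof -
  have "(\<Sum>m\<in>M. ff_load p d k m)
      = (\<Sum>i\<in>{1..k}. \<Sum>m\<in>M. if ff_machine p d i = m then p i else 0)"
    unfolding ff_load_def by (rule sum.swap)
  also have "\<dots> = (\<Sum>i\<in>{1..k}. p i)"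
    using assms by (intro sum.cong) (simp_all add: sum.delta')
  finally show ?thesis .
qed

lemma feasible_load_before_le:
  assumes "feasible n p d tau" "Suc k \<le> n"
  shows "(\<Sum>i\<in>{1..k}. if tau i = tau (Suc k) then p i else 0) + p (Suc k) \<le> d (Suc k)"
  using feasible_completion_le[OF assms(1), of "Suc k"] assms(2)
  by (simp add: completion_eq_sum_if)

lemma feasible_one_machine_prefixes_fit:
  assumes "feasible n p d tau" "\<forall>i\<in>{1..n}. tau i = c"
  shows "\<forall>i\<in>{1..n}. (\<Sum>k\<in>{1..i}. p k) \<le> d i"
proof
  fix i assume i: "i \<in> {1..n}"
  then have "completion p tau i = (\<Sum>k\<in>{1..i}. p k)"
    using assms(2) unfolding completion_eq_sum_if by (intro sum.cong) auto
  then show "(\<Sum>k\<in>{1..i}. p k) \<le> d i"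
    using feasible_completion_le[OF assms(1) i] by simp
qed

lemma ff_last_job_off_machine:
  assumes range: "\<And>i. i \<in> {1..k} \<Longrightarrow> ff_machine p d i \<in> {1,2,3}"
    and heavy: "(\<Sum>i\<in>{1..k}. if tau i = u then p i else 0) < ff_load p d k 2"
  obtains z where "z \<in> {1..k}" "ff_machine p d z \<in> {2,3}" "tau z \<noteq> u"
    and "\<forall>i\<in>{Suc z..k}. tau i \<noteq> u \<longrightarrow> ff_machine p d i = 1"
proof -
  define Z where "Z = {i\<in>{1..k}. ff_machine p d i \<in> {2,3} \<and> tau i \<noteq> u}"
  have "Z \<noteq> {}"
  proof
    assume "Z = {}"
    then have "ff_load p d k 2 + ff_load p d k 3 \<le> (\<Sum>i\<in>{1..k}. if tau i = u then p i else 0)"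
      unfolding ff_load_def sum.distrib[symmetric] Z_def by (intro sum_mono) auto
    then show False using heavy by simp
  qed
  moreover have "finite Z" unfolding Z_def by simp
  ultimately have max: "Max Z \<in> Z" "\<forall>i\<in>Z. i \<le> Max Z" by simp_all
  show thesis
  proof (rule that)
    show "Max Z \<in> {1..k}" "ff_machine p d (Max Z) \<in> {2,3}" "tau (Max Z) \<noteq> u"
      using max(1) by (simp_all add: Z_def)
    show "\<forall>i\<in>{Suc (Max Z)..k}. tau i \<noteq> u \<longrightarrow> ff_machine p d i = 1"
    proof (intro ballI impI)
      fix i assume i: "i \<in> {Suc (Max Z)..k}" "tau i \<noteq> u"
      then have "i \<notin> Z" using max(2) by fastforce
      moreover have "i \<in> {1..k}" using i(1) by simp
      ultimately show "ff_machine p d i = 1" using range i(2) by (auto simp: Z_def)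
    qed
  qed
qed

lemma ff_machine_Suc_le_3:
  assumes hp: "\<forall>j\<in>{1..n}. p j \<le> d j"
    and fe: "feasible n p d tau" and two: "card (tau ` {1..n}) \<le> 2"
    and jn: "Suc k \<le> n" and prev: "\<forall>i\<in>{1..k}. ff_machine p d i \<le> 3"
  shows "ff_machine p d (Suc k) \<le> 3"
proof (rule ccontr)
  assume "\<not> ?thesis"
  then have beyond: "3 < ff_machine p d (Suc k)" by simp
  let ?L = "ff_load p d k"
  define u where "u = tau (Suc k)"
  define a where "a = (\<Sum>i\<in>{1..k}. if tau i = u then p i else 0)"
  define b where "b = (\<Sum>i\<in>{1..k}. if tau i \<noteq> u then p i else 0)"
  have range: "ff_machine p d i \<in> {1,2,3}" if "i \<in> {1..k}" for i
    using ff_machine_pos[of i p d] hp prev that jn by fastforce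
  have a_less: "a < ?L m" if "m \<in> {1,2,3}" for m
    using ff_machine_first_fit[of m p d k] feasible_load_before_le[OF fe jn] beyond that
    unfolding a_def u_def by fastforce
  have "?L 1 + ?L 2 + ?L 3 = (\<Sum>i\<in>{1..k}. p i)"
    using ff_load_sum_machines[of "{1,2,3}" k p d] range by simp
  also have "\<dots> = a + b"
    unfolding a_def b_def sum.distrib[symmetric] by (intro sum.cong) auto
  finally have total: "?L 1 + ?L 2 + ?L 3 = a + b" .
  obtain z where z: "z \<in> {1..k}" "ff_machine p d z \<in> {2,3}" "tau z \<noteq> u"
    and last: "\<forall>i\<in>{Suc z..k}. tau i \<noteq> u \<longrightarrow> ff_machine p d i = 1"
  proof (rule ff_last_job_off_machine[OF range])
    show "(\<Sum>i\<in>{1..k}. if tau i = u then p i else 0) < ?L 2"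
      using a_less[of 2] unfolding a_def by simp
  qed
  have others: "tau i = tau z" if "i \<in> {1..z}" "tau i \<noteq> u" for i
    using card_image_le_2_eq[OF _ two, of z "Suc k" i] z jn that unfolding u_def by auto
  have "b < ?L 1 + ?L (ff_machine p d z)"
    unfolding b_def
  proof (rule ff_overflow_bound)
    show "z \<in> {1..k}" "1 < ff_machine p d z" using z by auto
    have "completion p tau z \<le> d z"
      using feasible_completion_le[OF fe] z(1) jn by simp
    moreover have "completion p tau z = (\<Sum>i\<in>{1..z}. if tau i \<noteq> u then p i else 0)"
      unfolding completion_eq_sum_if using others z(3) by (intro sum.cong) auto
    ultimately show "(\<Sum>i\<in>{1..z}. if tau i \<noteq> u then p i else 0) \<le> d z" by simp
    show "\<forall>i\<in>{Suc z..k}. (if tau i \<noteq> u then p i else 0)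
        \<le> (if ff_machine p d i = 1 then p i else 0)"
      using last by auto
  qed
  moreover have "a < ?L (if ff_machine p d z = 2 then 3 else 2)"
    by (rule a_less) simp
  ultimately show False using total z(2) by auto
qed

lemma FF_le_3_if_two_machines:
  assumes hp: "\<forall>j\<in>{1..n}. p j \<le> d j"
    and fe: "feasible n p d tau" and two: "card (tau ` {1..n}) \<le> 2"
  shows "FF n p d \<le> 3"
proof -
  have "\<forall>i\<in>{1..k}. ff_machine p d i \<le> 3" if "k \<le> n" for k
    using that
  proof (induction k)
    case (Suc k)
    then have "ff_machine p d (Suc k) \<le> 3"
      using ff_machine_Suc_le_3[OF hp fe two] by simp
    then show ?case using Suc by (auto simp: atLeastAtMostSuc_conv)
  qed simp
  then show ?thesis using FF_le[OF hp] by blast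
qed

lemma FF_eq_1_if_one_machine:
  assumes hp: "\<forall>j\<in>{1..n}. p j \<le> d j"
    and fe: "feasible n p d tau" and one: "tau ` {1..n} = {c}"
  shows "FF n p d = 1"
proof -
  have "\<forall>i\<in>{1..n}. ff_machine p d i = 1"
    using one feasible_one_machine_prefixes_fit[OF fe, of c]
    by (intro ff_machine_eq_1_if_prefixes_fit) auto
  moreover have "{1..n} \<noteq> {}" using one by auto
  ultimately have "ff_machine p d ` {1..n} = {1}" by auto
  then show ?thesis by (simp add: FF_eq_card)
qed

theorem mainTheorem8:
  fixes n :: nat and p d :: "nat \<Rightarrow> nat"
  assumes "\<forall>j\<in>{1..n}. 0 < p j \<and> p j \<le> d j"
  shows "(OPT n p d = 1 \<longrightarrow> FF n p d = 1)
       \<and> (OPT n p d = 2 \<longrightarrow> FF n p d \<le> 3)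
       \<and> (OPT n p d \<le> 2 \<longrightarrow> 2 * FF n p d \<le> 3 * OPT n p d)"
proof -
  have hp: "\<forall>j\<in>{1..n}. p j \<le> d j" using assms by auto
  obtain tau where fe: "feasible n p d tau" and opt: "card (tau ` {1..n}) = OPT n p d"
    using OPT_attained[OF hp] by blast
  have one: "FF n p d = 1" if "OPT n p d = 1"
    using that opt FF_eq_1_if_one_machine[OF hp fe] by (metis card_1_singletonE)
  have two: "FF n p d \<le> 3" if "OPT n p d = 2"
    using that opt FF_le_3_if_two_machines[OF hp fe] by simp
  have zero: "FF n p d = 0" if "OPT n p d = 0"
    using that opt by (simp add: FF_eq_card)
  have "2 * FF n p d \<le> 3 * OPT n p d" if "OPT n p d \<le> 2"
    using that one two zero by (cases "OPT n p d") (auto simp: le_Suc_eq)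
  then show ?thesis using one two by blast
qed

end
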